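(* Let $k_1,\dots,k_i$ be positive integers with $k_1+\dots+k_i=2k$ and let $c=(i_1,j_1),\dots,(i_k,j_k)$ be an oriented chord diagram on $\{1,\dots,2k\}$. Then, as elements of the graph space $\mathcal{G}$ (where $(\Gamma,-\omega)=-(\Gamma,\omega)$): (i) if $\tau=(i_r\ j_r)\in S_{2k}$ for some $1\le r\le k$, then $\Gamma_{k_1,\dots,k_i}(\tau\cdot c)=-\Gamma_{k_1,\dots,k_i}(c)$; (ii) if $\sigma=(\sigma_1,\dots,\sigma_i)\in S_{k_1}\times\dots\times S_{k_i}\subset S_{2k}$ (each $\sigma_r$ permuting the $r$-th consecutive block of $\{1,\dots,2k\}$ of size $k_r$), then $\Gamma_{k_1,\dots,k_i}(\sigma\cdot c)=\Gamma_{k_1,\dots,k_i}(c)$; (iii) if $\sigma\in S_i$, then $\Gamma_{k_{\sigma(1)},\dots,k_{\sigma(i)}}\big((\sigma_{(k_1,\dots,k_i)})^{-1}\cdot c\big)=\operatorname{sgn}(\sigma)\,\Gamma_{k_1,\dots,k_i}(c)$.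
   Context: $S_{2k}$ acts on oriented chord diagrams by $\sigma\cdot((i_1,j_1),\dots,(i_k,j_k))=((\sigma(i_1),\sigma(j_1)),\dots,(\sigma(i_k),\sigma(j_k)))$. For $\sigma\in S_i$, let $B_1,\dots,B_i$ be the consecutive blocks of $\{1,\dots,2k\}$ of sizes $k_1,\dots,k_i$ and $B'_1,\dots,B'_i$ the consecutive blocks of sizes $k_{\sigma(1)},\dots,k_{\sigma(i)}$; $\sigma_{(k_1,\dots,k_i)}\in S_{2k}$ maps the $a$-th element of $B'_t$ to the $a$-th element of $B_{\sigma(t)}$ (the block permutation $V^{\otimes k_1}\otimes\cdots\otimes V^{\otimes k_i}\to V^{\otimes k_{\sigma(1)}}\otimes\cdots\otimes V^{\otimes k_{\sigma(i)}}$). Oriented graph $\Gamma_{k_1,\dots,k_i}(c)$: half-edges $h_1,\dots,h_{2k}$; vertices $\{h_1,\dots,h_{k_1}\},\{h_{k_1+1},\dots,h_{k_1+k_2}\},\dots,\{h_{k_1+\dots+k_{i-1}+1},\dots,h_{2k}\}$; edges $(h_{i_1},h_{j_1}),\dots,(h_{i_k},h_{j_k})$; orientation given by the vertex ordering as listed and the edge orientations as listed. Graphs, orientations and the space $\mathcal{G}$: a graph is a finite set of half-edges with a partition into vertices and a partition into two-element edges; an orientation is a class of (vertex ordering, ordering within each edge) modulo simultaneous changes of total sign $+1$ (sign of the vertex permutation times $(-1)$ per flipped edge); $\mathcal{G}$ is spanned by isomorphism classes of oriented graphs modulo $(\Gamma,-\omega)=-(\Gamma,\omega)$. *)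

theory Defs
  imports "HOL-Combinatorics.Combinatorics"
begin

(* A representative is a pair (V, E):
   V is the list of vertices (each a set of half-edges), the list order being
   the vertex ordering; E is the set of edges, each written as an ordered pair
   (the ordering within the edge). *)
type_synonym ograph = "nat set list \<times> (nat \<times> nat) set"

definition halfedges :: "ograph \<Rightarrow> nat set" where
  "halfedges g = \<Union> (set (fst g))"

definition valid_graph :: "ograph \<Rightarrow> bool" where
  "valid_graph g \<longleftrightarrow>
     (let V = fst g; E = snd g; H = halfedges g in
        (\<forall>v\<in>set V. finite v \<and> v \<noteq> {}) \<and>
        (\<forall>i<length V. \<forall>j<length V. i \<noteq> j \<longrightarrow> V ! i \<inter> V ! j = {}) \<and>
        (\<forall>e\<in>E. fst e \<noteq> snd e \<and> fst e \<in> H \<and> snd e \<in> H) \<and>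
        (\<forall>h\<in>H. \<exists>!e\<in>E. fst e = h \<or> snd e = h))"

(* iso_sign g g' s: there is an isomorphism of underlying graphs g -> g'
   carrying the orientation of g to s times the orientation of g'
   (s = sign of the induced vertex permutation times (-1)^(flipped edges)). *)
definition iso_sign :: "ograph \<Rightarrow> ograph \<Rightarrow> rat \<Rightarrow> bool" where
  "iso_sign g g' s \<longleftrightarrow> valid_graph g \<and> valid_graph g' \<and>
     length (fst g') = length (fst g) \<and>
     (\<exists>f \<pi>. bij_betw f (halfedges g) (halfedges g') \<and>
        \<pi> permutes {..<length (fst g)} \<and>
        (\<forall>i<length (fst g). f ` (fst g ! i) = fst g' ! \<pi> i) \<and>
        (\<forall>e\<in>snd g. (f (fst e), f (snd e)) \<in> snd g' \<or> (f (snd e), f (fst e)) \<in> snd g') \<and>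
        s = of_int (sign \<pi>) * (-1) ^ card {e\<in>snd g. (f (snd e), f (fst e)) \<in> snd g'})"

definition delta :: "ograph \<Rightarrow> ograph \<Rightarrow> rat" where
  "delta g x = (if x = g then 1 else 0)"

(* The relations defining the graph space: G = Q<representatives> / Grel.
   Identifying [g] = s [g'] whenever iso_sign g g' s covers both passing to
   isomorphism classes of oriented graphs (s = 1) and (G,-w) = -(G,w). *)
inductive_set Grel :: "(ograph \<Rightarrow> rat) set" where
  zero: "(\<lambda>_. 0) \<in> Grel"
| gen: "iso_sign g g' s \<Longrightarrow> (\<lambda>x. delta g x - s * delta g' x) \<in> Grel"
| add: "a \<in> Grel \<Longrightarrow> b \<in> Grel \<Longrightarrow> (\<lambda>x. a x + b x) \<in> Grel"
| smult: "a \<in> Grel \<Longrightarrow> (\<lambda>x. r * a x) \<in> Grel"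

definition G_eq :: "ograph \<Rightarrow> rat \<Rightarrow> ograph \<Rightarrow> bool" where
  "G_eq g s h \<longleftrightarrow> (\<lambda>x. delta g x - s * delta h x) \<in> Grel"

definition chord_diagram :: "nat \<Rightarrow> (nat \<times> nat) list \<Rightarrow> bool" where
  "chord_diagram k c \<longleftrightarrow> length c = k \<and>
     distinct (concat (map (\<lambda>(a, b). [a, b]) c)) \<and>
     set (concat (map (\<lambda>(a, b). [a, b]) c)) = {1..2 * k}"

definition act :: "(nat \<Rightarrow> nat) \<Rightarrow> (nat \<times> nat) list \<Rightarrow> (nat \<times> nat) list" where
  "act \<sigma> c = map (\<lambda>(a, b). (\<sigma> a, \<sigma> b)) c"

(* start of the t-th consecutive block (0-based t) and the block itself *)
definition bstart :: "nat list \<Rightarrow> nat \<Rightarrow> nat" where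
  "bstart ks t = sum_list (take t ks)"

definition block :: "nat list \<Rightarrow> nat \<Rightarrow> nat set" where
  "block ks t = {bstart ks t + 1 .. bstart ks t + ks ! t}"

(* Gamma_{k_1,...,k_i}(c): half-edge h_j is the number j *)
definition Gamma :: "nat list \<Rightarrow> (nat \<times> nat) list \<Rightarrow> ograph" where
  "Gamma ks c = (map (block ks) [0..<length ks], set c)"

(* sigma_{(k_1,...,k_i)}: the a-th element of block t of (k_sigma(1),...,k_sigma(i))
   goes to the a-th element of block sigma(t) of (k_1,...,k_i); identity elsewhere. *)
definition block_perm :: "nat list \<Rightarrow> (nat \<Rightarrow> nat) \<Rightarrow> nat \<Rightarrow> nat" where
  "block_perm ks \<sigma> x =
     (let ks' = permute_list \<sigma> ks in
      if \<exists>t a. t < length ks \<and> a < ks' ! t \<and> x = bstart ks' t + a + 1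
      then (let (t, a) = (THE (t, a). t < length ks \<and> a < ks' ! t \<and> x = bstart ks' t + a + 1)
            in bstart ks (\<sigma> t) + a + 1)
      else x)"

end

theory Submission
  imports Defs
begin

(* Each identity is witnessed by an explicit isomorphism of oriented graphs.
   For (i) the identity on half-edges works: transposing the endpoints of the r-th chord
   reverses exactly that edge, so the sign is -1.  For (ii) and (iii) one relabels the
   half-edges by a permutation that carries vertices (blocks) onto vertices and chords onto
   chords with their orientation; no edge is reversed, so the sign is that of the induced
   permutation of the vertices: the identity in (ii), and sigma in (iii), where the block
   permutation moves the t-th block of (k_sigma(1), ..., k_sigma(i)) onto the sigma(t)-th
   block of (k_1, ..., k_i). *)

lemma bstart_Suc: "t < length ks \<Longrightarrow> bstart ks (Suc t) = bstart ks t + ks ! t"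
  by (simp add: bstart_def take_Suc_conv_app_nth)

lemma bstart_mono: "t \<le> t' \<Longrightarrow> bstart ks t \<le> bstart ks t'"
  by (auto simp: bstart_def take_add dest!: le_Suc_ex)

lemma bstart_add_le_sum_list: "t < length ks \<Longrightarrow> bstart ks t + ks ! t \<le> sum_list ks"
  using bstart_mono[of "Suc t" "length ks" ks] by (simp add: bstart_Suc) (simp add: bstart_def)

lemma bstart_add_inject:
  assumes "t < length ks" "a < ks ! t" "t' < length ks" "a' < ks ! t'"
    and "bstart ks t + a = bstart ks t' + a'"
  shows "t = t' \<and> a = a'"
proof -
  have "\<not> t < t'" and "\<not> t' < t"
    using assms bstart_mono[of "Suc t" t' ks] bstart_mono[of "Suc t'" t ks]
      bstart_Suc[of t ks] bstart_Suc[of t' ks] by auto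
  then show ?thesis using assms by simp
qed

lemma bstart_add_surj:
  "1 \<le> x \<Longrightarrow> x \<le> sum_list ks \<Longrightarrow> \<exists>t a. t < length ks \<and> a < ks ! t \<and> x = bstart ks t + a + 1"
proof (induction ks arbitrary: x)
  case Nil
  then show ?case by simp
next
  case (Cons m ks)
  show ?case
  proof (cases "x \<le> m")
    case True
    then show ?thesis using Cons.prems
      by (intro exI[of _ 0] exI[of _ "x - 1"]) (auto simp: bstart_def)
  next
    case False
    have "\<exists>t a. t < length ks \<and> a < ks ! t \<and> x - m = bstart ks t + a + 1"
      using Cons.IH[of "x - m"] Cons.prems False by auto
    then obtain t a where "t < length ks" "a < ks ! t" "x - m = bstart ks t + a + 1"
      by blast
    then show ?thesis using False
      by (intro exI[of _ "Suc t"] exI[of _ a]) (auto simp: bstart_def)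
  qed
qed

lemma block_eq_image: "block ks t = (\<lambda>a. bstart ks t + a + 1) ` {..<ks ! t}"
proof -
  have "x \<in> (\<lambda>a. bstart ks t + a + 1) ` {..<ks ! t}" if "x \<in> block ks t" for x
    using that by (auto simp: block_def image_iff intro!: bexI[of _ "x - bstart ks t - 1"])
  then show ?thesis by (auto simp: block_def)
qed

lemma Union_blocks: "(\<Union>t<length ks. block ks t) = {1..sum_list ks}"
proof
  show "(\<Union>t<length ks. block ks t) \<subseteq> {1..sum_list ks}"
    using bstart_add_le_sum_list by (force simp: block_def)
  show "{1..sum_list ks} \<subseteq> (\<Union>t<length ks. block ks t)"
    using bstart_add_surj by (fastforce simp: block_eq_image)
qed

lemma blocks_disjoint:
  assumes "t < length ks" "t' < length ks" "t \<noteq> t'"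
  shows "block ks t \<inter> block ks t' = {}"
  using assms bstart_add_inject[of t ks _ t'] by (fastforce simp: block_eq_image)

lemma halfedges_Gamma: "halfedges (Gamma ks c) = {1..sum_list ks}"
  using Union_blocks[of ks] by (simp add: halfedges_def Gamma_def atLeast0LessThan)

lemma set_concat_chord_pairs: "set (concat (map (\<lambda>(a, b). [a, b]) c)) = (\<Union>(a, b)\<in>set c. {a, b})"
  by (induction c) auto

lemma chord_diagram_endpoints:
  "chord_diagram k c \<Longrightarrow> (\<Union>(a, b)\<in>set c. {a, b}) = {1..2 * k}"
  using set_concat_chord_pairs[of c] by (simp add: chord_diagram_def)

lemma chord_diagram_edge:
  assumes "chord_diagram k c" "(a, b) \<in> set c"
  shows "a \<noteq> b" "a \<in> {1..2 * k}" "b \<in> {1..2 * k}"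
proof -
  have "distinct (concat (map (\<lambda>(a, b). [a, b]) c))"
    using assms(1) by (simp add: chord_diagram_def)
  then show "a \<noteq> b"
    using assms(2) by (force simp: distinct_concat_iff)
  show "a \<in> {1..2 * k}" "b \<in> {1..2 * k}"
    using chord_diagram_endpoints[OF assms(1)] assms(2) by auto
qed

lemma chord_diagram_edges_disjoint:
  assumes "chord_diagram k c" "e \<in> set c" "e' \<in> set c"
    and "h \<in> {fst e, snd e}" "h \<in> {fst e', snd e'}"
  shows "e = e'"
proof (rule ccontr)
  assume "e \<noteq> e'"
  then have "(\<lambda>(a, b). [a, b]) e \<noteq> (\<lambda>(a, b). [a, b]) e'"
    by (cases e, cases e') auto
  moreover have "distinct (concat (map (\<lambda>(a, b). [a, b]) c))"
    using assms(1) by (simp add: chord_diagram_def)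
  ultimately have "set ((\<lambda>(a, b). [a, b]) e) \<inter> set ((\<lambda>(a, b). [a, b]) e') = {}"
    using assms(2,3) unfolding distinct_concat_iff by force
  then show False
    using assms(4,5) by (cases e, cases e') auto
qed

lemma chord_diagram_no_reverse:
  assumes "chord_diagram k c" "(a, b) \<in> set c"
  shows "(b, a) \<notin> set c"
  using chord_diagram_edges_disjoint[OF assms, of "(b, a)" a] chord_diagram_edge(1)[OF assms]
  by auto

lemma chord_diagram_act:
  assumes "chord_diagram k c" "p permutes {1..2 * k}"
  shows "chord_diagram k (act p c)"
proof -
  have "concat (map (\<lambda>(a, b). [a, b]) (act p c)) = map p (concat (map (\<lambda>(a, b). [a, b]) c))"
    by (induction c) (auto simp: act_def)
  then show ?thesis
    using assms permutes_image[OF assms(2)] inj_on_subset[OF permutes_inj[OF assms(2)]]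
    by (simp add: chord_diagram_def act_def distinct_map)
qed

lemma valid_graph_Gamma:
  assumes "\<forall>x\<in>set ks. 0 < x" "sum_list ks = 2 * k" "chord_diagram k c"
  shows "valid_graph (Gamma ks c)"
proof -
  have H: "halfedges (Gamma ks c) = {1..2 * k}"
    using assms(2) by (simp add: halfedges_Gamma)
  have "\<exists>!e\<in>set c. fst e = h \<or> snd e = h" if "h \<in> {1..2 * k}" for h
  proof -
    have "h \<in> (\<Union>(a, b)\<in>set c. {a, b})"
      using that chord_diagram_endpoints[OF assms(3)] by simp
    then obtain e where e: "e \<in> set c" "fst e = h \<or> snd e = h"
      by auto
    then show ?thesis
      using chord_diagram_edges_disjoint[OF assms(3) _ e(1), of _ h] by (intro ex1I[of _ e]) auto
  qed
  then show ?thesis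
    using assms(1) blocks_disjoint[of _ ks] chord_diagram_edge[OF assms(3)]
    unfolding valid_graph_def Let_def H by (auto simp: Gamma_def block_def Suc_le_eq)
qed

lemma G_eq_by_iso:
  assumes "valid_graph g" "valid_graph g'" "length (fst g') = length (fst g)"
    and "bij_betw f (halfedges g) (halfedges g')" "\<pi> permutes {..<length (fst g)}"
    and "\<forall>i<length (fst g). f ` (fst g ! i) = fst g' ! \<pi> i"
    and "\<forall>e\<in>snd g. (f (fst e), f (snd e)) \<in> snd g' \<or> (f (snd e), f (fst e)) \<in> snd g'"
    and "s = of_int (sign \<pi>) * (-1) ^ card {e\<in>snd g. (f (snd e), f (fst e)) \<in> snd g'}"
  shows "G_eq g s g'"
proof -
  have "iso_sign g g' s"
    unfolding iso_sign_def using assms by blast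
  then show ?thesis
    unfolding G_eq_def by (rule Grel.gen)
qed

lemma G_eq_Gamma_relabel:
  assumes ks: "\<forall>x\<in>set ks. 0 < x" "sum_list ks = 2 * k"
    and ks': "\<forall>x\<in>set ks'. 0 < x" "sum_list ks' = 2 * k" "length ks' = length ks"
    and c: "chord_diagram k c"
    and p: "p permutes {1..2 * k}" and \<pi>: "\<pi> permutes {..<length ks}"
    and blocks: "\<And>t. t < length ks \<Longrightarrow> p ` block ks (\<pi> t) = block ks' t"
  shows "G_eq (Gamma ks' (act p c)) (of_int (sign \<pi>)) (Gamma ks c)"
proof (rule G_eq_by_iso[where f = "inv p" and \<pi> = \<pi>])
  show "valid_graph (Gamma ks' (act p c))"
    using valid_graph_Gamma[OF ks'(1,2) chord_diagram_act[OF c p]] .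
  show "valid_graph (Gamma ks c)"
    using valid_graph_Gamma[OF ks c] .
  show "length (fst (Gamma ks c)) = length (fst (Gamma ks' (act p c)))"
    using ks'(3) by (simp add: Gamma_def)
  show "bij_betw (inv p) (halfedges (Gamma ks' (act p c))) (halfedges (Gamma ks c))"
    using permutes_imp_bij[OF permutes_inv[OF p]] ks(2) ks'(2) by (simp add: halfedges_Gamma)
  show "\<pi> permutes {..<length (fst (Gamma ks' (act p c)))}"
    using \<pi> ks'(3) by (simp add: Gamma_def)
  show "\<forall>t<length (fst (Gamma ks' (act p c))). inv p ` (fst (Gamma ks' (act p c)) ! t) = fst (Gamma ks c) ! \<pi> t"
  proof (intro allI impI)
    fix t
    assume "t < length (fst (Gamma ks' (act p c)))"
    then have t: "t < length ks" "\<pi> t < length ks"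
      using ks'(3) permutes_in_image[OF \<pi>] by (auto simp: Gamma_def)
    have "inv p ` block ks' t = block ks (\<pi> t)"
      using blocks[OF t(1)] image_inv_f_f[OF permutes_inj[OF p]] by metis
    then show "inv p ` (fst (Gamma ks' (act p c)) ! t) = fst (Gamma ks c) ! \<pi> t"
      using t ks'(3) by (simp add: Gamma_def)
  qed
  show "\<forall>e\<in>snd (Gamma ks' (act p c)). (inv p (fst e), inv p (snd e)) \<in> snd (Gamma ks c)
      \<or> (inv p (snd e), inv p (fst e)) \<in> snd (Gamma ks c)"
    by (auto simp: Gamma_def act_def permutes_inverses(2)[OF p])
  have no_flip: "{e\<in>snd (Gamma ks' (act p c)). (inv p (snd e), inv p (fst e)) \<in> snd (Gamma ks c)} = {}"
    using chord_diagram_no_reverse[OF c] by (auto simp: Gamma_def act_def permutes_inverses(2)[OF p])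
  show "of_int (sign \<pi>) = of_int (sign \<pi>) * (-1) ^ card {e\<in>snd (Gamma ks' (act p c)).
      (inv p (snd e), inv p (fst e)) \<in> snd (Gamma ks c)}"
    unfolding no_flip by simp
qed

lemma set_act_transpose_chord:
  assumes c: "chord_diagram k c" and ij: "(i, j) \<in> set c"
  shows "set (act (transpose i j) c) = insert (j, i) (set c - {(i, j)})"
proof -
  let ?\<tau> = "\<lambda>(a, b). (transpose i j a, transpose i j b)"
  have "?\<tau> e = e" if e: "e \<in> set c - {(i, j)}" for e
  proof -
    have "fst e \<notin> {i, j}" "snd e \<notin> {i, j}"
      using chord_diagram_edges_disjoint[OF c _ ij, of e] e by auto
    then show ?thesis by (auto split: prod.split)
  qed
  then have fixed: "?\<tau> ` (set c - {(i, j)}) = set c - {(i, j)}"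
    by simp
  have "set (act (transpose i j) c) = ?\<tau> ` insert (i, j) (set c - {(i, j)})"
    using ij by (simp add: act_def insert_absorb)
  also have "\<dots> = insert (j, i) (set c - {(i, j)})"
    unfolding image_insert fixed by simp
  finally show ?thesis .
qed

lemma G_eq_Gamma_transpose_edge:
  assumes ks: "\<forall>x\<in>set ks. 0 < x" "sum_list ks = 2 * k"
    and c: "chord_diagram k c" and ij: "(i, j) \<in> set c"
  shows "G_eq (Gamma ks (act (transpose i j) c)) (-1) (Gamma ks c)"
proof (rule G_eq_by_iso[where f = id and \<pi> = id])
  have "transpose i j permutes {1..2 * k}"
    using chord_diagram_edge[OF c ij] by (intro permutes_swap_id)
  then show "valid_graph (Gamma ks (act (transpose i j) c))"
    using valid_graph_Gamma[OF ks chord_diagram_act[OF c]] by blast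
  show "valid_graph (Gamma ks c)"
    using valid_graph_Gamma[OF ks c] .
  show "bij_betw id (halfedges (Gamma ks (act (transpose i j) c))) (halfedges (Gamma ks c))"
    by (simp add: halfedges_Gamma)
  have edges: "snd (Gamma ks (act (transpose i j) c)) = insert (j, i) (set c - {(i, j)})"
    using set_act_transpose_chord[OF c ij] by (simp add: Gamma_def)
  show "\<forall>e\<in>snd (Gamma ks (act (transpose i j) c)). (id (fst e), id (snd e)) \<in> snd (Gamma ks c)
      \<or> (id (snd e), id (fst e)) \<in> snd (Gamma ks c)"
    using ij unfolding edges by (auto simp: Gamma_def)
  have flipped: "{e\<in>snd (Gamma ks (act (transpose i j) c)). (id (snd e), id (fst e)) \<in> snd (Gamma ks c)}
      = {(j, i)}"
    using ij chord_diagram_no_reverse[OF c] unfolding edges by (auto simp: Gamma_def)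
  show "-1 = of_int (sign id) * (-1) ^ card {e\<in>snd (Gamma ks (act (transpose i j) c)).
      (id (snd e), id (fst e)) \<in> snd (Gamma ks c)}"
    unfolding flipped by (simp add: sign_id)
qed (simp_all add: Gamma_def)

lemma sum_list_permute_list:
  fixes xs :: "'a::comm_monoid_add list"
  assumes "\<sigma> permutes {..<length xs}"
  shows "sum_list (permute_list \<sigma> xs) = sum_list xs"
  by (simp only: sum_mset_sum_list[symmetric] mset_permute_list[OF assms])

lemma block_perm_bstart:
  assumes \<sigma>: "\<sigma> permutes {..<length ks}" and t: "t < length ks" and a: "a < ks ! \<sigma> t"
  shows "block_perm ks \<sigma> (bstart (permute_list \<sigma> ks) t + a + 1) = bstart ks (\<sigma> t) + a + 1"
proof -
  let ?ks' = "permute_list \<sigma> ks"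
  let ?P = "\<lambda>(t', a'). t' < length ks \<and> a' < ?ks' ! t' \<and> bstart ?ks' t + a + 1 = bstart ?ks' t' + a' + 1"
  have P: "?P (t, a)"
    using t a permute_list_nth[OF \<sigma> t] by simp
  have "(THE x. ?P x) = (t, a)"
  proof (rule the_equality)
    fix x
    assume "?P x"
    then show "x = (t, a)"
      using bstart_add_inject[of t ?ks' a "fst x" "snd x"] P by (cases x) auto
  qed (rule P)
  moreover have "\<exists>t' a'. ?P (t', a')"
    using P by blast
  ultimately show ?thesis
    unfolding block_perm_def Let_def by (simp only: if_True) simp
qed

lemma block_perm_outside:
  assumes \<sigma>: "\<sigma> permutes {..<length ks}" and x: "x \<notin> {1..sum_list ks}"
  shows "block_perm ks \<sigma> x = x"
proof -
  let ?ks' = "permute_list \<sigma> ks"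
  have "x \<noteq> bstart ?ks' t + a + 1" if "t < length ks" "a < ?ks' ! t" for t a
    using bstart_add_le_sum_list[of t ?ks'] sum_list_permute_list[OF \<sigma>] that x by auto
  then have "\<not> (\<exists>t a. t < length ks \<and> a < ?ks' ! t \<and> x = bstart ?ks' t + a + 1)"
    by blast
  then show ?thesis
    unfolding block_perm_def Let_def by (simp only: if_not_P) simp
qed

lemma block_perm_image_block:
  assumes \<sigma>: "\<sigma> permutes {..<length ks}" and t: "t < length ks"
  shows "block_perm ks \<sigma> ` block (permute_list \<sigma> ks) t = block ks (\<sigma> t)"
proof -
  have "block_perm ks \<sigma> ` block (permute_list \<sigma> ks) t
      = (\<lambda>a. block_perm ks \<sigma> (bstart (permute_list \<sigma> ks) t + a + 1)) ` {..<ks ! \<sigma> t}"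
    unfolding block_eq_image image_image permute_list_nth[OF \<sigma> t] ..
  also have "\<dots> = (\<lambda>a. bstart ks (\<sigma> t) + a + 1) ` {..<ks ! \<sigma> t}"
    using block_perm_bstart[OF \<sigma> t] by simp
  also have "\<dots> = block ks (\<sigma> t)"
    by (simp add: block_eq_image)
  finally show ?thesis .
qed

lemma block_perm_permutes:
  assumes \<sigma>: "\<sigma> permutes {..<length ks}"
  shows "block_perm ks \<sigma> permutes {1..sum_list ks}"
proof (rule bij_imp_permutes)
  have "block_perm ks \<sigma> ` {1..sum_list ks}
      = block_perm ks \<sigma> ` (\<Union>t<length ks. block (permute_list \<sigma> ks) t)"
    using Union_blocks[of "permute_list \<sigma> ks"] sum_list_permute_list[OF \<sigma>] by simp
  also have "\<dots> = (\<Union>t<length ks. block ks (\<sigma> t))"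
    using block_perm_image_block[OF \<sigma>] by (simp add: image_UN)
  also have "\<dots> = {1..sum_list ks}"
    using Union_blocks[of ks] permutes_image[OF \<sigma>] by (simp add: image_image[symmetric])
  finally have onto: "block_perm ks \<sigma> ` {1..sum_list ks} = {1..sum_list ks}" .
  then have "inj_on (block_perm ks \<sigma>) {1..sum_list ks}"
    by (intro finite_surj_inj) simp_all
  with onto show "bij_betw (block_perm ks \<sigma>) {1..sum_list ks} {1..sum_list ks}"
    by (simp add: bij_betw_def)
qed (rule block_perm_outside[OF \<sigma>])

theorem lemma5p2:
  fixes ks :: "nat list" and k :: nat and c :: "(nat \<times> nat) list"
  assumes pos: "\<forall>x\<in>set ks. 0 < x"
    and total: "sum_list ks = 2 * k"
    and chord: "chord_diagram k c"
  shows "(\<forall>r<k. G_eq (Gamma ks (act (transpose (fst (c ! r)) (snd (c ! r))) c)) (-1) (Gamma ks c))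
       \<and> (\<forall>\<sigma>. \<sigma> permutes {1..2 * k} \<and> (\<forall>t<length ks. \<sigma> ` block ks t = block ks t)
              \<longrightarrow> G_eq (Gamma ks (act \<sigma> c)) 1 (Gamma ks c))
       \<and> (\<forall>\<sigma>. \<sigma> permutes {..<length ks}
              \<longrightarrow> G_eq (Gamma (permute_list \<sigma> ks) (act (inv (block_perm ks \<sigma>)) c))
                       (of_int (sign \<sigma>)) (Gamma ks c))"
proof (intro conjI allI impI)
  fix r
  assume "r < k"
  then have "(fst (c ! r), snd (c ! r)) \<in> set c"
    using chord by (simp add: chord_diagram_def)
  then show "G_eq (Gamma ks (act (transpose (fst (c ! r)) (snd (c ! r))) c)) (-1) (Gamma ks c)"
    by (rule G_eq_Gamma_transpose_edge[OF pos total chord])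
next
  fix \<sigma>
  assume "\<sigma> permutes {1..2 * k} \<and> (\<forall>t<length ks. \<sigma> ` block ks t = block ks t)"
  then show "G_eq (Gamma ks (act \<sigma> c)) 1 (Gamma ks c)"
    using G_eq_Gamma_relabel[OF pos total pos total refl chord, of \<sigma> id] by (simp add: sign_id)
next
  fix \<sigma>
  assume \<sigma>: "\<sigma> permutes {..<length ks}"
  let ?\<beta> = "block_perm ks \<sigma>"
  have \<beta>: "?\<beta> permutes {1..2 * k}"
    using block_perm_permutes[OF \<sigma>] total by simp
  have "inv ?\<beta> ` block ks (\<sigma> t) = block (permute_list \<sigma> ks) t" if "t < length ks" for t
    using image_inv_f_f[OF permutes_inj[OF \<beta>], of "block (permute_list \<sigma> ks) t"]
    by (simp only: block_perm_image_block[OF \<sigma> that])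
  then show "G_eq (Gamma (permute_list \<sigma> ks) (act (inv ?\<beta>) c)) (of_int (sign \<sigma>)) (Gamma ks c)"
    using G_eq_Gamma_relabel[OF pos total _ _ _ chord permutes_inv[OF \<beta>] \<sigma>] \<sigma> pos total
    by (simp add: sum_list_permute_list)
qed

end
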